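(* Let $(X_t)$ be a time-homogeneous Markov chain (random walk) on a countable set of sites. Let $S$ be a finite set of occupied sites, let $0$ be a source site, and assume that from any site the walk a.s. eventually leaves any finite set. Let $x\ne y$ be sites not in $S$. Consider the following two procedures. Sequential: particle 1 starts at $0$ and walks until it first visits a site outside $S$, where it sticks. Then particle 2 starts at $0$ and walks until it first visits a site outside the enlarged cluster, where it sticks. Simultaneous: both particles start at $0$ and take steps synchronously, independently. Each particle sticks at the first site it visits that is unoccupied at that moment, and a stuck particle's site becomes occupied immediately. If both particles first reach the same unoccupied site at the same time, particle 1 sticks there and particle 2 continues. Then the probability that the final cluster equals $S\cup\{x,y\}$ is the same under both procedures. Consequently the two procedures yield the same probability distribution of final clusters. *)

theory Defs
  imports "HOL-Probability.Probability"
begin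

text \<open>A time-homogeneous Markov chain on a countable site type 'a is given by
its transition kernel K :: 'a => 'a pmf.\<close>

fun path_weight :: "('a \<Rightarrow> 'a pmf) \<Rightarrow> 'a list \<Rightarrow> ennreal" where
  "path_weight K [] = 1"
| "path_weight K [z] = 1"
| "path_weight K (z # z' # zs) = ennreal (pmf (K z) z') * path_weight K (z' # zs)"

definition first_exit_path :: "'a set \<Rightarrow> 'a \<Rightarrow> 'a list \<Rightarrow> bool" where
  "first_exit_path A z p \<longleftrightarrow> p \<noteq> [] \<and> hd p = z \<and> last p \<notin> A \<and>
      (\<forall>i < length p - 1. p ! i \<in> A)"

definition exit_prob :: "('a \<Rightarrow> 'a pmf) \<Rightarrow> 'a set \<Rightarrow> 'a \<Rightarrow> ennreal" where
  "exit_prob K A z = (\<Sum>\<^sub>\<infinity> p \<in> {p. first_exit_path A z p}. path_weight K p)"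

definition seq_valid :: "'a set \<Rightarrow> 'a \<Rightarrow> 'a list \<Rightarrow> 'a list \<Rightarrow> bool" where
  "seq_valid S s0 p1 p2 \<longleftrightarrow>
     first_exit_path S s0 p1 \<and> first_exit_path (S \<union> {last p1}) s0 p2"

definition seq_prob :: "('a \<Rightarrow> 'a pmf) \<Rightarrow> 'a set \<Rightarrow> 'a \<Rightarrow> 'a set \<Rightarrow> ennreal" where
  "seq_prob K S s0 C =
     (\<Sum>\<^sub>\<infinity> (p1, p2) \<in> {(p1, p2). seq_valid S s0 p1 p2 \<and> S \<union> {last p1, last p2} = C}.
        path_weight K p1 * path_weight K p2)"

text \<open>Simultaneous procedure: both particles start at s0 and move synchronously and
independently; particle i is stuck at time Ti = length pi - 1.  At time t,
particle 1 sees as occupied S together with particle 2's site if particle 2 stuck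
strictly before t; particle 2 sees S together with particle 1's site if particle 1
stuck at time \<le> t (ties at the same site are won by particle 1).\<close>

definition occ1 :: "'a set \<Rightarrow> 'a list \<Rightarrow> nat \<Rightarrow> 'a set" where
  "occ1 S p2 t = S \<union> (if length p2 - 1 < t then {last p2} else {})"

definition occ2 :: "'a set \<Rightarrow> 'a list \<Rightarrow> nat \<Rightarrow> 'a set" where
  "occ2 S p1 t = S \<union> (if length p1 - 1 \<le> t then {last p1} else {})"

definition sim_valid :: "'a set \<Rightarrow> 'a \<Rightarrow> 'a list \<Rightarrow> 'a list \<Rightarrow> bool" where
  "sim_valid S s0 p1 p2 \<longleftrightarrow>
     p1 \<noteq> [] \<and> p2 \<noteq> [] \<and> hd p1 = s0 \<and> hd p2 = s0 \<and>
     (\<forall>t < length p1 - 1. p1 ! t \<in> occ1 S p2 t) \<and> last p1 \<notin> occ1 S p2 (length p1 - 1) \<and>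
     (\<forall>t < length p2 - 1. p2 ! t \<in> occ2 S p1 t) \<and> last p2 \<notin> occ2 S p1 (length p2 - 1)"

definition sim_prob :: "('a \<Rightarrow> 'a pmf) \<Rightarrow> 'a set \<Rightarrow> 'a \<Rightarrow> 'a set \<Rightarrow> ennreal" where
  "sim_prob K S s0 C =
     (\<Sum>\<^sub>\<infinity> (p1, p2) \<in> {(p1, p2). sim_valid S s0 p1 p2 \<and> S \<union> {last p1, last p2} = C}.
        path_weight K p1 * path_weight K p2)"

end

theory Submission
  imports Defs
begin

text \<open>Both probabilities are sums of path weights over pairs of stopped trajectories, so it
suffices to exhibit a bijection between sequential and simultaneous pairs that preserves the
weight and the set of sticking sites.  Most pairs are valid for both procedures and are mapped to
themselves.  The exception is a sequential pair in which particle 2 leaves S at the final site a of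
particle 1 at a time k earlier than the time T1 at which particle 1 arrived there.  Run
simultaneously, particle 2 sticks at a at time k, and particle 1, finding a occupied at time T1,
continues along particle 2's sequential continuation.  Path weights factor at a common site (the
Markov property), so this exchange of tails preserves the weight, and the same exchange undoes
it.\<close>

definition exit_time :: "'a set \<Rightarrow> 'a list \<Rightarrow> nat" where
  "exit_time A p = (LEAST i. p ! i \<notin> A)"

lemma exit_time_le: "p ! i \<notin> A \<Longrightarrow> exit_time A p \<le> i"
  unfolding exit_time_def by (rule Least_le)

lemma nth_exit_time_notin: "p ! i \<notin> A \<Longrightarrow> p ! exit_time A p \<notin> A"
  unfolding exit_time_def by (rule LeastI)

lemma nth_less_exit_time: "j < exit_time A p \<Longrightarrow> p ! j \<in> A"
  unfolding exit_time_def using not_less_Least by blast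

lemma exit_time_eqI: "p ! k \<notin> A \<Longrightarrow> (\<And>j. j < k \<Longrightarrow> p ! j \<in> A) \<Longrightarrow> exit_time A p = k"
  unfolding exit_time_def by (metis (mono_tags, lifting) Least_equality not_less)

lemma exit_time_less_length:
  assumes "p \<noteq> []" "last p \<notin> A"
  shows "exit_time A p < length p"
proof -
  have "exit_time A p \<le> length p - 1"
    using assms by (intro exit_time_le) (simp add: last_conv_nth)
  then show ?thesis
    using assms(1) by (simp add: less_Suc_eq_le flip: length_greater_0_conv)
qed

lemma exit_time_first_exit_path:
  "first_exit_path A z p \<Longrightarrow> exit_time A p = length p - 1"
  unfolding first_exit_path_def by (intro exit_time_eqI) (auto simp: last_conv_nth)

lemma path_weight_append:
  "path_weight K (xs @ z # ys) = path_weight K (xs @ [z]) * path_weight K (z # ys)"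
  by (induction K xs rule: path_weight.induct) (simp_all add: mult.assoc)

text \<open>Intended for w ! j = last u: the two trajectories then meet at that site and exchange their
futures from there.\<close>

definition graft :: "'a list \<Rightarrow> 'a list \<Rightarrow> nat \<Rightarrow> 'a list \<times> 'a list" where
  "graft u w j = (u @ drop (Suc j) w, take (Suc j) w)"

lemma graft_conv_butlast:
  assumes "u \<noteq> []" "j < length w" "w ! j = last u"
  shows "graft u w j = (butlast u @ drop j w, take j w @ [last u])"
proof -
  have "drop j w = last u # drop (Suc j) w"
    using assms by (metis Cons_nth_drop_Suc)
  then show ?thesis
    using assms by (simp add: graft_def take_Suc_conv_app_nth)
qed

lemma path_weight_graft:
  assumes "u \<noteq> []" "j < length w" "w ! j = last u"
  shows "path_weight K (fst (graft u w j)) * path_weight K (snd (graft u w j))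
           = path_weight K u * path_weight K w"
proof -
  have w: "w = take j w @ last u # drop (Suc j) w"
    using assms by (metis Cons_nth_drop_Suc append_take_drop_id)
  have "path_weight K (butlast u @ drop j w) = path_weight K u * path_weight K (last u # drop (Suc j) w)"
    using assms path_weight_append[of K "butlast u" "last u"]
    by (simp flip: Cons_nth_drop_Suc)
  moreover have "path_weight K w = path_weight K (take j w @ [last u]) * path_weight K (last u # drop (Suc j) w)"
    by (subst w) (rule path_weight_append)
  ultimately show ?thesis
    using assms by (simp add: graft_conv_butlast mult_ac)
qed

lemma graft_lasts:
  assumes "u \<noteq> []" "j < length w" "w ! j = last u"
  shows "{last (fst (graft u w j)), last (snd (graft u w j))} = {last u, last w}"
proof -
  have "last (take (Suc j) w) = last u"
    using assms by (simp add: take_Suc_conv_app_nth)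
  moreover have "last (u @ drop (Suc j) w) = (if Suc j < length w then last w else last u)"
    using assms by (simp add: last_append)
  moreover have "last w = last u" if "\<not> Suc j < length w"
  proof -
    have "j = length w - 1"
      using assms(2) that by linarith
    then show ?thesis
      using assms(2,3) by (metis last_conv_nth length_0_conv less_nat_zero_code)
  qed
  ultimately show ?thesis
    by (auto simp: graft_def)
qed

lemma graft_graft:
  assumes "u \<noteq> []"
  shows "graft (snd (graft u w j)) (fst (graft u w j)) (length u - 1) = (w, u)"
  using assms by (simp add: graft_def)

lemma seq_validD:
  assumes "seq_valid S s0 p1 p2"
  shows "p1 \<noteq> []" "hd p1 = s0" "last p1 \<notin> S" "\<And>i. i < length p1 - 1 \<Longrightarrow> p1 ! i \<in> S"
    and "p2 \<noteq> []" "hd p2 = s0" "last p2 \<notin> insert (last p1) S"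
      "\<And>i. i < length p2 - 1 \<Longrightarrow> p2 ! i \<in> insert (last p1) S"
  using assms by (auto simp: seq_valid_def first_exit_path_def)

definition seq_graftable :: "'a set \<Rightarrow> 'a list \<Rightarrow> 'a list \<Rightarrow> bool" where
  "seq_graftable S p1 p2 \<longleftrightarrow> exit_time S p2 < length p1 - 1 \<and> p2 ! exit_time S p2 = last p1"

definition sim_graftable :: "'a set \<Rightarrow> 'a list \<Rightarrow> 'a list \<Rightarrow> bool" where
  "sim_graftable S q1 q2 \<longleftrightarrow> length q2 - 1 < length q1 - 1 \<and> q1 ! exit_time S q1 = last q2"

lemma seq_graftableD:
  assumes "seq_valid S s0 p1 p2" "seq_graftable S p1 p2"
  shows "p1 \<noteq> []" "exit_time S p2 < length p2" "p2 ! exit_time S p2 = last p1"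
  using assms seq_validD[OF assms(1)] exit_time_less_length[of p2 S]
  by (auto simp: seq_graftable_def)

lemma sim_graftableD:
  assumes "sim_valid S s0 q1 q2" "sim_graftable S q1 q2"
  shows "q2 \<noteq> []" "exit_time S q1 < length q1" "q1 ! exit_time S q1 = last q2"
  using assms exit_time_less_length[of q1 S]
  by (auto simp: sim_valid_def occ1_def sim_graftable_def)

lemma sim_valid_graft:
  assumes v: "seq_valid S s0 p1 p2" and g: "seq_graftable S p1 p2"
    and q: "graft p1 p2 (exit_time S p2) = (q1, q2)"
  shows "sim_valid S s0 q1 q2"
proof -
  define k where "k = exit_time S p2"
  note p = seq_validD[OF v]
  have k: "k < length p1 - 1" "p2 ! k = last p1"
    using g by (simp_all add: seq_graftable_def k_def)
  have "k \<noteq> length p2 - 1"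
    using k(2) p(5,7) by (auto simp: last_conv_nth)
  then have k2: "k < length p2 - 1"
    using seq_graftableD(2)[OF v g] by (simp add: k_def)
  have q1: "q1 = butlast p1 @ drop k p2" and q2: "q2 = take k p2 @ [last p1]"
    using q k k2 p(1) by (simp_all add: graft_conv_butlast k_def)
  show ?thesis
    unfolding sim_valid_def
  proof (intro conjI allI impI)
    show "q1 \<noteq> []" "q2 \<noteq> []" "hd q1 = s0" "hd q2 = s0"
      using q p by (auto simp: graft_def k_def hd_take)
    fix t assume t: "t < length q1 - 1"
    show "q1 ! t \<in> occ1 S q2 t"
    proof (cases "t < length p1 - 1")
      case True
      then show ?thesis using p(4) by (simp add: q1 nth_append nth_butlast occ1_def)
    next
      case False
      then have "q1 ! t = p2 ! (k + (t - (length p1 - 1)))" "k + (t - (length p1 - 1)) < length p2 - 1"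
        using t k2 by (simp_all add: q1 nth_append)
      then show ?thesis using p(8) False k k2 by (auto simp: occ1_def q2)
    qed
  next
    show "last q1 \<notin> occ1 S q2 (length q1 - 1)"
      using p(7) k2 by (simp add: q1 q2 occ1_def)
  next
    fix t assume "t < length q2 - 1"
    then show "q2 ! t \<in> occ2 S q1 t"
      using nth_less_exit_time[of t S p2] k2 by (simp add: q2 nth_append occ2_def k_def)
  next
    show "last q2 \<notin> occ2 S q1 (length q2 - 1)"
      using p(1,3) k k2 by (auto simp: q1 q2 occ2_def)
  qed
qed

lemma sim_graftable_graft:
  assumes v: "seq_valid S s0 p1 p2" and g: "seq_graftable S p1 p2"
    and q: "graft p1 p2 (exit_time S p2) = (q1, q2)"
  shows "sim_graftable S q1 q2" and "exit_time S q1 = length p1 - 1"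
proof -
  define k where "k = exit_time S p2"
  note p = seq_validD[OF v]
  have k: "k < length p1 - 1" "p2 ! k = last p1" "k < length p2"
    using g seq_graftableD[OF v g] by (simp_all add: seq_graftable_def k_def)
  have q1: "q1 = p1 @ drop (Suc k) p2" and q2: "q2 = take (Suc k) p2"
    using q by (simp_all add: graft_def k_def)
  show "exit_time S q1 = length p1 - 1"
    using p(1,3,4) by (intro exit_time_eqI) (auto simp: q1 nth_append last_conv_nth)
  then show "sim_graftable S q1 q2"
    using p(1) k by (auto simp: sim_graftable_def q1 q2 nth_append last_conv_nth take_Suc_conv_app_nth)
qed

lemma sim_graftable_exit_time:
  assumes v: "sim_valid S s0 q1 q2" and g: "sim_graftable S q1 q2"
  shows "length q2 - 1 < exit_time S q1" and "exit_time S q1 < length q1 - 1"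
proof -
  define s where "s = exit_time S q1"
  have q1: "q1 \<noteq> []" "last q1 \<notin> insert (last q2) S"
    "\<And>t. t < length q1 - 1 \<Longrightarrow> q1 ! t \<in> occ1 S q2 t"
    using v g by (auto simp: sim_valid_def sim_graftable_def occ1_def)
  have qs: "q1 ! s = last q2" "last q2 \<notin> S"
    using v g by (auto simp: sim_graftable_def sim_valid_def occ2_def s_def)
  have "s < length q1"
    using q1 exit_time_less_length[of q1 S] by (simp add: s_def)
  moreover have "s \<noteq> length q1 - 1"
    using qs q1(1,2) by (auto simp: last_conv_nth)
  ultimately show s: "s < length q1 - 1"
    unfolding s_def by linarith
  show "length q2 - 1 < s"
    using q1(3)[OF s] qs by (simp add: occ1_def split: if_splits)
qed

lemma seq_valid_graft:
  assumes v: "sim_valid S s0 q1 q2" and g: "sim_graftable S q1 q2"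
    and p: "graft q2 q1 (exit_time S q1) = (p2, p1)"
  shows "seq_valid S s0 p1 p2"
proof -
  define c where "c = last q2"
  define s where "s = exit_time S q1"
  have q2: "q2 \<noteq> []" "hd q2 = s0" "c \<notin> S" "\<And>t. t < length q2 - 1 \<Longrightarrow> q2 ! t \<in> S"
    using v g by (auto simp: sim_valid_def sim_graftable_def occ2_def c_def)
  have q1: "q1 \<noteq> []" "hd q1 = s0" "last q1 \<notin> insert c S"
    "\<And>t. t < length q1 - 1 \<Longrightarrow> q1 ! t \<in> insert c S"
    using v g by (auto simp: sim_valid_def sim_graftable_def occ1_def c_def split: if_splits)
  have qs: "q1 ! s = c"
    using g by (simp add: sim_graftable_def s_def c_def)
  have s: "s < length q1 - 1"
    using sim_graftable_exit_time[OF v g] by (simp add: s_def)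
  have p1: "p1 = take (Suc s) q1"
    using p by (simp add: graft_def s_def)
  have p2: "p2 = butlast q2 @ drop s q1"
    using p graft_conv_butlast[of q2 s q1] s qs q2(1) by (simp add: s_def c_def)
  have lp1: "last p1 = c"
    using s qs by (simp add: p1 take_Suc_conv_app_nth)
  have "first_exit_path S s0 p1"
    using q1 s q2(3) lp1 nth_less_exit_time[of _ S q1]
    by (auto simp: first_exit_path_def p1 hd_take s_def)
  moreover have "first_exit_path (insert c S) s0 p2"
    unfolding first_exit_path_def
  proof (intro conjI allI impI)
    show "p2 \<noteq> []" "last p2 \<notin> insert c S" "hd p2 = s0"
      using p q1 q2 s by (auto simp: graft_def s_def)
    fix i assume i: "i < length p2 - 1"
    show "p2 ! i \<in> insert c S"
    proof (cases "i < length q2 - 1")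
      case True
      then show ?thesis using q2 by (simp add: p2 nth_append nth_butlast)
    next
      case False
      then have "p2 ! i = q1 ! (s + (i - (length q2 - 1)))" "s + (i - (length q2 - 1)) < length q1 - 1"
        using i s by (simp_all add: p2 nth_append)
      then show ?thesis using q1(4) by simp
    qed
  qed
  ultimately show ?thesis
    using lp1 by (simp add: seq_valid_def)
qed

lemma seq_graftable_graft:
  assumes v: "sim_valid S s0 q1 q2" and g: "sim_graftable S q1 q2"
    and p: "graft q2 q1 (exit_time S q1) = (p2, p1)"
  shows "seq_graftable S p1 p2" and "exit_time S p2 = length q2 - 1"
proof -
  define s where "s = exit_time S q1"
  have q2: "q2 \<noteq> []" "last q2 \<notin> S" "\<And>t. t < length q2 - 1 \<Longrightarrow> q2 ! t \<in> S"
    using v g by (auto simp: sim_valid_def sim_graftable_def occ2_def)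
  have s: "length q2 - 1 < s" "s < length q1 - 1" "q1 ! s = last q2"
    using g sim_graftable_exit_time[OF v g] by (simp_all add: sim_graftable_def s_def)
  have p1: "p1 = take (Suc s) q1" and p2: "p2 = q2 @ drop (Suc s) q1"
    using p by (simp_all add: graft_def s_def)
  show "exit_time S p2 = length q2 - 1"
    using q2 by (intro exit_time_eqI) (auto simp: p2 nth_append last_conv_nth)
  then show "seq_graftable S p1 p2"
    using q2 s by (auto simp: seq_graftable_def p1 p2 nth_append last_conv_nth take_Suc_conv_app_nth)
qed

lemma sim_valid_if_not_seq_graftable:
  assumes v: "seq_valid S s0 p1 p2" and ng: "\<not> seq_graftable S p1 p2"
  shows "sim_valid S s0 p1 p2" and "\<not> sim_graftable S p1 p2"
proof -
  define k where "k = exit_time S p2"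
  note p = seq_validD[OF v]
  have "exit_time S p1 = length p1 - 1"
    using v exit_time_first_exit_path by (auto simp: seq_valid_def)
  then show "\<not> sim_graftable S p1 p2"
    using p(1,7) by (auto simp: sim_graftable_def last_conv_nth)
  have "p2 ! t \<in> occ2 S p1 t" if t: "t < length p2 - 1" for t
  proof (cases "p2 ! t \<in> S")
    case False
    then have "k \<le> t" "p2 ! k \<notin> S"
      by (simp_all add: k_def exit_time_le nth_exit_time_notin)
    then have "p2 ! k = last p1"
      using p(8)[of k] t by simp
    then have "length p1 - 1 \<le> t"
      using ng \<open>k \<le> t\<close> by (auto simp: seq_graftable_def k_def)
    then show ?thesis
      using p(8)[OF t] by (simp add: occ2_def)
  qed (simp add: occ2_def)
  then show "sim_valid S s0 p1 p2"
    using p by (auto simp: sim_valid_def occ1_def occ2_def)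
qed

lemma seq_valid_if_not_sim_graftable:
  assumes v: "sim_valid S s0 q1 q2" and ng: "\<not> sim_graftable S q1 q2"
  shows "seq_valid S s0 q1 q2" and "\<not> seq_graftable S q1 q2"
proof -
  define s where "s = exit_time S q1"
  have q1: "q1 \<noteq> []" "hd q1 = s0" "last q1 \<notin> S" "\<And>t. t < length q1 - 1 \<Longrightarrow> q1 ! t \<in> occ1 S q2 t"
    using v by (auto simp: sim_valid_def occ1_def)
  have q2: "q2 \<noteq> []" "hd q2 = s0" "last q2 \<notin> insert (last q1) S"
    "\<And>t. t < length q2 - 1 \<Longrightarrow> q2 ! t \<in> occ2 S q1 t"
    using v by (auto simp: sim_valid_def occ1_def occ2_def split: if_splits)
  have "q1 ! t \<in> S" if t: "t < length q1 - 1" for t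
  proof (rule ccontr)
    assume "q1 ! t \<notin> S"
    then have "s \<le> t" "q1 ! s \<notin> S"
      by (simp_all add: s_def exit_time_le nth_exit_time_notin)
    then have "q1 ! s \<in> occ1 S q2 s"
      using q1(4) t by simp
    then have "sim_graftable S q1 q2"
      using \<open>q1 ! s \<notin> S\<close> \<open>s \<le> t\<close> t by (auto simp: sim_graftable_def occ1_def s_def split: if_splits)
    with ng show False ..
  qed
  then have fe1: "first_exit_path S s0 q1"
    using q1 by (simp add: first_exit_path_def)
  have "q2 ! t \<in> insert (last q1) S" if "t < length q2 - 1" for t
    using q2(4)[OF that] by (auto simp: occ2_def split: if_splits)
  then have "first_exit_path (insert (last q1) S) s0 q2"
    using q2 by (simp add: first_exit_path_def)
  with fe1 show "seq_valid S s0 q1 q2"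
    by (simp add: seq_valid_def)
  show "\<not> seq_graftable S q1 q2"
  proof
    define k where "k = exit_time S q2"
    assume "seq_graftable S q1 q2"
    then have k: "k < length q1 - 1" "q2 ! k = last q1"
      by (simp_all add: seq_graftable_def k_def)
    have "k < length q2"
      using q2 exit_time_less_length[of q2 S] by (simp add: k_def)
    moreover have "k \<noteq> length q2 - 1"
      using k q2(1,3) by (auto simp: last_conv_nth)
    ultimately have "q2 ! k \<in> occ2 S q1 k"
      using q2(4) by simp
    then show False
      using k q1(3) by (simp add: occ2_def)
  qed
qed

definition seq_to_sim :: "'a set \<Rightarrow> 'a list \<times> 'a list \<Rightarrow> 'a list \<times> 'a list" where
  "seq_to_sim S = (\<lambda>(p1, p2). graft p1 p2 (exit_time S p2))"

definition sim_to_seq :: "'a set \<Rightarrow> 'a list \<times> 'a list \<Rightarrow> 'a list \<times> 'a list" where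
  "sim_to_seq S = (\<lambda>(q1, q2). prod.swap (graft q2 q1 (exit_time S q1)))"

lemma bij_betw_seq_to_sim:
  "bij_betw (seq_to_sim S)
     {(p1, p2). seq_valid S s0 p1 p2 \<and> seq_graftable S p1 p2 \<and> S \<union> {last p1, last p2} = C}
     {(q1, q2). sim_valid S s0 q1 q2 \<and> sim_graftable S q1 q2 \<and> S \<union> {last q1, last q2} = C}"
    (is "bij_betw _ ?A ?B")
proof (rule bij_betw_byWitness[where f' = "sim_to_seq S"])
  have fwd: "seq_to_sim S a \<in> ?B \<and> sim_to_seq S (seq_to_sim S a) = a" if mem: "a \<in> ?A" for a
  proof -
    obtain p1 p2 where a: "a = (p1, p2)" and v: "seq_valid S s0 p1 p2"
      and g: "seq_graftable S p1 p2" and cl: "S \<union> {last p1, last p2} = C"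
      using mem by (cases a) auto
    obtain q1 q2 where q: "graft p1 p2 (exit_time S p2) = (q1, q2)"
      by fastforce
    have "S \<union> {last q1, last q2} = S \<union> {last p1, last p2}"
      using arg_cong[OF graft_lasts[OF seq_graftableD[OF v g]], of "(\<union>) S"] q by simp
    moreover have "graft q2 q1 (length p1 - 1) = (p2, p1)"
      using graft_graft[of p1 p2 "exit_time S p2"] seq_graftableD(1)[OF v g] q by simp
    ultimately show ?thesis
      using a cl q sim_valid_graft[OF v g q] sim_graftable_graft[OF v g q]
      by (simp add: seq_to_sim_def sim_to_seq_def)
  qed
  have bwd: "sim_to_seq S b \<in> ?A \<and> seq_to_sim S (sim_to_seq S b) = b" if mem: "b \<in> ?B" for b
  proof -
    obtain q1 q2 where b: "b = (q1, q2)" and v: "sim_valid S s0 q1 q2"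
      and g: "sim_graftable S q1 q2" and cl: "S \<union> {last q1, last q2} = C"
      using mem by (cases b) auto
    obtain p1 p2 where p: "graft q2 q1 (exit_time S q1) = (p2, p1)"
      by fastforce
    have "S \<union> {last p1, last p2} = S \<union> {last q1, last q2}"
      using arg_cong[OF graft_lasts[OF sim_graftableD[OF v g]], of "(\<union>) S"] p
      by (simp add: insert_commute)
    moreover have "graft p1 p2 (length q2 - 1) = (q1, q2)"
      using graft_graft[of q2 q1 "exit_time S q1"] sim_graftableD(1)[OF v g] p by simp
    ultimately show ?thesis
      using b cl p seq_valid_graft[OF v g p] seq_graftable_graft[OF v g p]
      by (simp add: seq_to_sim_def sim_to_seq_def)
  qed
  show "\<forall>a\<in>?A. sim_to_seq S (seq_to_sim S a) = a"
    by (rule ballI[OF conjunct2[OF fwd]])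
  show "seq_to_sim S ` ?A \<subseteq> ?B"
    by (rule image_subsetI[OF conjunct1[OF fwd]])
  show "\<forall>b\<in>?B. seq_to_sim S (sim_to_seq S b) = b"
    by (rule ballI[OF conjunct2[OF bwd]])
  show "sim_to_seq S ` ?B \<subseteq> ?A"
    by (rule image_subsetI[OF conjunct1[OF bwd]])
qed

lemma infsum_split_ennreal:
  fixes f :: "'b \<Rightarrow> ennreal"
  shows "infsum f A = infsum f (A \<inter> B) + infsum f (A - B)"
proof -
  have "infsum f ((A \<inter> B) \<union> (A - B)) = infsum f (A \<inter> B) + infsum f (A - B)"
    by (rule infsum_Un_disjoint) (auto intro: nonneg_summable_on_complete)
  then show ?thesis
    by (simp add: Int_Diff_Un)
qed

lemma seq_prob_eq_sim_prob: "seq_prob K S s0 C = sim_prob K S s0 C"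
proof -
  define w :: "'a list \<times> 'a list \<Rightarrow> ennreal"
    where "w = (\<lambda>(p1, p2). path_weight K p1 * path_weight K p2)"
  let ?Seq = "{(p1, p2). seq_valid S s0 p1 p2 \<and> S \<union> {last p1, last p2} = C}"
  let ?Sim = "{(q1, q2). sim_valid S s0 q1 q2 \<and> S \<union> {last q1, last q2} = C}"
  let ?G = "{(p1, p2). seq_graftable S p1 p2}"
  let ?H = "{(q1, q2). sim_graftable S q1 q2}"
  have w_graft: "w (seq_to_sim S (p1, p2)) = w (p1, p2)"
    if "seq_valid S s0 p1 p2" "seq_graftable S p1 p2" for p1 p2
    using path_weight_graft[OF seq_graftableD[OF that], of K]
    by (simp add: w_def seq_to_sim_def case_prod_beta)
  have "infsum w (?Seq \<inter> ?G)
      = infsum w {(p1, p2). seq_valid S s0 p1 p2 \<and> seq_graftable S p1 p2 \<and> S \<union> {last p1, last p2} = C}"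
    by (rule arg_cong[where f = "infsum w"]) auto
  also have "\<dots> = infsum (\<lambda>a. w (seq_to_sim S a))
      {(p1, p2). seq_valid S s0 p1 p2 \<and> seq_graftable S p1 p2 \<and> S \<union> {last p1, last p2} = C}"
    using w_graft by (intro infsum_cong) auto
  also have "\<dots> = infsum w
      {(q1, q2). sim_valid S s0 q1 q2 \<and> sim_graftable S q1 q2 \<and> S \<union> {last q1, last q2} = C}"
    by (rule infsum_reindex_bij_betw[OF bij_betw_seq_to_sim])
  also have "\<dots> = infsum w (?Sim \<inter> ?H)"
    by (rule arg_cong[where f = "infsum w"]) auto
  finally have grafted: "infsum w (?Seq \<inter> ?G) = infsum w (?Sim \<inter> ?H)" .
  have ungrafted: "?Seq - ?G = ?Sim - ?H"
    by (auto dest: sim_valid_if_not_seq_graftable seq_valid_if_not_sim_graftable)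
  have "seq_prob K S s0 C = infsum w ?Seq"
    by (simp add: seq_prob_def w_def)
  also have "\<dots> = infsum w (?Seq \<inter> ?G) + infsum w (?Seq - ?G)"
    by (rule infsum_split_ennreal)
  also have "\<dots> = infsum w (?Sim \<inter> ?H) + infsum w (?Sim - ?H)"
    by (simp only: grafted ungrafted)
  also have "\<dots> = sim_prob K S s0 C"
    by (simp add: sim_prob_def w_def flip: infsum_split_ennreal)
  finally show ?thesis .
qed

theorem mainTheorem8:
  fixes K :: "'a::countable \<Rightarrow> 'a pmf" and S :: "'a set" and s0 x y :: 'a
  assumes "finite S"
    and escape: "\<And>z F. finite F \<Longrightarrow> exit_prob K F z = 1"
    and "x \<noteq> y" and "x \<notin> S" and "y \<notin> S"
  shows "seq_prob K S s0 (S \<union> {x, y}) = sim_prob K S s0 (S \<union> {x, y})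
         \<and> (\<forall>C. seq_prob K S s0 C = sim_prob K S s0 C)"
  by (simp add: seq_prob_eq_sim_prob)

end
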